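(* For every integer $r\ge0$, $$D^r(\delta)(\tau)=\frac{1}{24^r}\left(-\tfrac32\right)^{\overline r}e\!\left(-\frac{x}{24}\right)\left(\frac{\pi y}{6}\right)^{\frac14-\frac r2}M_{\frac14-\frac r2,\frac34-\frac r2}\!\left(\frac{\pi y}{6}\right).$$
   Context: $\tau=x+iy\in\mathbb H$, $e(w)=e^{2\pi iw}$, $M_{\kappa,\mu}$ is the Whittaker $M$-function, $(x)^{\overline r}$ is the rising factorial, $\delta(\tau):=e(-\frac{x}{24})(\frac{\pi y}{6})^{1/4}M_{\frac14,\frac34}(\frac{\pi y}{6})$, and on smooth functions $D:=\frac{1}{2\pi i}\cdot\frac12\left(\frac{\partial}{\partial x}-i\frac{\partial}{\partial y}\right)$ (which equals $\frac{1}{2\pi i}\frac{d}{d\tau}$ on holomorphic functions). *)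

theory Defs
  imports "HOL-Analysis.Analysis"
begin

definition kummerM :: "real \<Rightarrow> real \<Rightarrow> real \<Rightarrow> real" where
  "kummerM a b z = (\<Sum>n. pochhammer a n / pochhammer b n * z ^ n / fact n)"

definition whittakerM :: "real \<Rightarrow> real \<Rightarrow> real \<Rightarrow> real" where
  "whittakerM \<kappa> \<mu> z = exp (- z / 2) * z powr (\<mu> + 1/2) * kummerM (\<mu> - \<kappa> + 1/2) (1 + 2 * \<mu>) z"

definition e :: "real \<Rightarrow> complex" where
  "e w = exp (2 * pi * \<i> * of_real w)"

definition delta :: "complex \<Rightarrow> complex" where
  "delta \<tau> = e (- Re \<tau> / 24) *
     of_real ((pi * Im \<tau> / 6) powr (1/4) * whittakerM (1/4) (3/4) (pi * Im \<tau> / 6))"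

definition dx :: "(complex \<Rightarrow> complex) \<Rightarrow> complex \<Rightarrow> complex" where
  "dx f \<tau> = vector_derivative (\<lambda>t::real. f (\<tau> + of_real t)) (at 0)"

definition dy :: "(complex \<Rightarrow> complex) \<Rightarrow> complex \<Rightarrow> complex" where
  "dy f \<tau> = vector_derivative (\<lambda>t::real. f (\<tau> + \<i> * of_real t)) (at 0)"

definition Dop :: "(complex \<Rightarrow> complex) \<Rightarrow> complex \<Rightarrow> complex" where
  "Dop f \<tau> = 1 / (2 * pi * \<i>) * (1/2) * (dx f \<tau> - \<i> * dy f \<tau>)"

end

theory Submission
  imports Defs
begin

text \<open>
  With Y = \<pi> y / 6 one has Y^(1/4 - r/2) M_{1/4 - r/2, 3/4 - r/2}(Y) = Y^a e^(-Y/2) M(1, a + 1, Y)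
  for a = 3/2 - r, and from the series of M(1, a + 1, \<cdot>) one gets the contiguous relation
  d/dY (Y^a M(1, a + 1, Y)) = a Y^(a-1) M(1, a, Y).  Since D acts on e(-x/24) g(y) as
  multiplication by -1/48 followed by -(1/4\<pi>) d/dy, the relation shows that one application of D
  lowers a by one and multiplies the coefficient by -a/24 = (-3/2 + r)/24; induction on r
  produces the rising factorial.
\<close>

lemma pochhammer_nonzero_real:
  fixes b :: real
  assumes "b \<notin> \<int>\<^sub>\<le>\<^sub>0"
  shows "pochhammer b n \<noteq> 0"
  using assms by (auto dest: pochhammer_eq_0_imp_nonpos_Int)

lemma summable_inverse_pochhammer_power:
  fixes b z :: real
  assumes "b \<notin> \<int>\<^sub>\<le>\<^sub>0"
  shows "summable (\<lambda>n. inverse (pochhammer b n) * z ^ n)"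
proof (rule summable_ratio_test[where c = "1/2" and N = "nat \<lceil>2 * \<bar>z\<bar> + \<bar>b\<bar> + 1\<rceil>"])
  fix n assume "nat \<lceil>2 * \<bar>z\<bar> + \<bar>b\<bar> + 1\<rceil> \<le> n"
  then have n: "real n \<ge> 2 * \<bar>z\<bar> + \<bar>b\<bar> + 1" by linarith
  then have pos: "b + real n > 0" by linarith
  have "inverse (pochhammer b (Suc n)) * z ^ Suc n = z / (b + real n) * (inverse (pochhammer b n) * z ^ n)"
    using pochhammer_nonzero_real[OF assms, of n] pos by (simp add: pochhammer_rec' field_simps)
  then have "norm (inverse (pochhammer b (Suc n)) * z ^ Suc n)
      = \<bar>z\<bar> / (b + real n) * norm (inverse (pochhammer b n) * z ^ n)"
    using pos by (simp add: abs_mult)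
  also have "\<dots> \<le> 1/2 * norm (inverse (pochhammer b n) * z ^ n)"
    using pos n by (intro mult_right_mono) (simp_all add: field_simps)
  finally show "norm (inverse (pochhammer b (Suc n)) * z ^ Suc n) \<le> 1/2 * norm (inverse (pochhammer b n) * z ^ n)" .
qed simp

lemma kummerM_1_eq_suminf: "kummerM 1 b z = (\<Sum>n. inverse (pochhammer b n) * z ^ n)"
  unfolding kummerM_def by (simp add: pochhammer_fact[symmetric] field_simps)

lemma kummerM_1_contiguous:
  fixes b z :: real
  assumes b: "b \<notin> \<int>\<^sub>\<le>\<^sub>0"
  defines "c \<equiv> \<lambda>n. inverse (pochhammer (b + 1) n)"
  shows "b * kummerM 1 (b + 1) z + z * (\<Sum>n. diffs c n * z ^ n) = b * kummerM 1 b z"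
proof -
  have b1: "b + 1 \<notin> \<int>\<^sub>\<le>\<^sub>0"
    using b by (auto dest: plus_one_in_nonpos_Ints_imp)
  have "summable (\<lambda>n. diffs c n * z ^ n)"
    unfolding c_def by (rule termdiff_converges_all) (rule summable_inverse_pochhammer_power[OF b1])
  then have "(\<lambda>n. z * (diffs c n * z ^ n)) sums (z * (\<Sum>n. diffs c n * z ^ n))"
    by (intro sums_mult summable_sums)
  moreover have "(\<lambda>n. z * (diffs c n * z ^ n)) = (\<lambda>n. real (Suc n) * c (Suc n) * z ^ Suc n)"
    by (auto simp: diffs_def)
  ultimately have "(\<lambda>n. real n * c n * z ^ n) sums (z * (\<Sum>n. diffs c n * z ^ n))"
    using sums_Suc[of "\<lambda>n. real n * c n * z ^ n"] by simp
  moreover have "(\<lambda>n. c n * z ^ n) sums kummerM 1 (b + 1) z"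
    unfolding c_def kummerM_1_eq_suminf
    using summable_inverse_pochhammer_power[OF b1] by (simp add: summable_sums)
  ultimately have "(\<lambda>n. b * (c n * z ^ n) + real n * c n * z ^ n)
      sums (b * kummerM 1 (b + 1) z + z * (\<Sum>n. diffs c n * z ^ n))"
    by (intro sums_add sums_mult)
  moreover have "b * (c n * z ^ n) + real n * c n * z ^ n = b * (inverse (pochhammer b n) * z ^ n)" for n
  proof -
    have "b * pochhammer (b + 1) n = (b + real n) * pochhammer b n"
      using pochhammer_rec[of b n] pochhammer_rec'[of b n] by simp
    then have "(b + real n) * c n = b * inverse (pochhammer b n)"
      using pochhammer_nonzero_real[OF b, of n] pochhammer_nonzero_real[OF b1, of n]
      unfolding c_def by (simp add: field_simps)
    moreover have "b * (c n * z ^ n) + real n * c n * z ^ n = (b + real n) * c n * z ^ n"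
      by (simp add: algebra_simps)
    ultimately show ?thesis by simp
  qed
  moreover have "(\<lambda>n. b * (inverse (pochhammer b n) * z ^ n)) sums (b * kummerM 1 b z)"
    unfolding kummerM_1_eq_suminf
    using summable_inverse_pochhammer_power[OF b] by (intro sums_mult summable_sums)
  ultimately show ?thesis
    using sums_unique2 by simp
qed

lemma has_real_derivative_powr_kummerM_1:
  fixes b z :: real
  assumes b: "b \<notin> \<int>\<^sub>\<le>\<^sub>0" and z: "z > 0"
  shows "((\<lambda>z. z powr b * kummerM 1 (b + 1) z) has_real_derivative b * z powr (b - 1) * kummerM 1 b z) (at z)"
proof -
  define c where "c = (\<lambda>n. inverse (pochhammer (b + 1) n))"
  have "b + 1 \<notin> \<int>\<^sub>\<le>\<^sub>0"
    using b by (auto dest: plus_one_in_nonpos_Ints_imp)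
  then have "(kummerM 1 (b + 1) has_real_derivative (\<Sum>n. diffs c n * z ^ n)) (at z)"
    unfolding kummerM_1_eq_suminf[abs_def] c_def
    by (intro termdiffs_strong_converges_everywhere summable_inverse_pochhammer_power)
  then have "((\<lambda>z. z powr b * kummerM 1 (b + 1) z) has_real_derivative
      b * z powr (b - 1) * kummerM 1 (b + 1) z + z powr b * (\<Sum>n. diffs c n * z ^ n)) (at z)"
    using z by (auto intro!: derivative_eq_intros)
  moreover have "z powr b = z powr (b - 1) * z"
    using z by (simp add: powr_diff)
  ultimately have "((\<lambda>z. z powr b * kummerM 1 (b + 1) z) has_real_derivative
      z powr (b - 1) * (b * kummerM 1 (b + 1) z + z * (\<Sum>n. diffs c n * z ^ n))) (at z)"
    by (simp add: algebra_simps)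
  then show ?thesis
    unfolding c_def kummerM_1_contiguous[OF b] by (simp add: mult_ac)
qed

definition kummer_profile :: "real \<Rightarrow> real \<Rightarrow> real" where
  "kummer_profile a y = y powr a * exp (- y / 2) * kummerM 1 (a + 1) y"

lemma has_real_derivative_kummer_profile:
  assumes "a \<notin> \<int>\<^sub>\<le>\<^sub>0" and "y > 0"
  shows "(kummer_profile a has_real_derivative a * kummer_profile (a - 1) y - kummer_profile a y / 2) (at y)"
proof -
  have "((\<lambda>y. exp (- y / 2)) has_real_derivative exp (- y / 2) * (- 1 / 2)) (at y)"
    by (auto intro!: derivative_eq_intros)
  from DERIV_mult[OF has_real_derivative_powr_kummerM_1[OF assms] this]
  show ?thesis
    unfolding kummer_profile_def[abs_def] by (simp add: algebra_simps)
qed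

lemma powr_whittakerM_eq_kummer_profile:
  assumes "y > 0"
  shows "y powr \<kappa> * whittakerM \<kappa> (\<kappa> + 1/2) y = kummer_profile (2 * \<kappa> + 1) y"
proof -
  have "y powr \<kappa> * y powr (\<kappa> + 1/2 + 1/2) = y powr (2 * \<kappa> + 1)"
    by (simp add: powr_add[symmetric])
  moreover have "1 + 2 * (\<kappa> + 1/2) = 2 * \<kappa> + 1 + 1"
    by simp
  ultimately show ?thesis
    unfolding whittakerM_def kummer_profile_def by (simp add: algebra_simps)
qed

lemma e_linear_has_vector_derivative:
  "((\<lambda>t. e (p + q * t)) has_vector_derivative 2 * pi * \<i> * of_real q * e (p + q * t)) (at t)"
proof -
  have "((\<lambda>t. 2 * pi * \<i> * of_real (p + q * t)) has_vector_derivative 2 * pi * \<i> * of_real q) (at t)"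
    by (intro has_vector_derivative_mult_right has_vector_derivative_of_real)
       (auto intro!: derivative_eq_intros)
  from field_vector_diff_chain_at[OF this DERIV_exp] show ?thesis
    unfolding e_def by (simp add: o_def)
qed

lemma Dop_e_times_of_Im:
  assumes y: "Im \<tau> > 0" and g: "(g has_real_derivative g') (at (Im \<tau>))"
    and F: "\<And>w. Im w > 0 \<Longrightarrow> F w = e (c * Re w) * of_real (g (Im w))"
  shows "Dop F \<tau> = e (c * Re \<tau>) * of_real (c * g (Im \<tau>) / 2 - g' / (4 * pi))"
proof -
  have "(\<lambda>t. F (\<tau> + of_real t)) = (\<lambda>t. e (c * Re \<tau> + c * t) * of_real (g (Im \<tau>)))"
    using F y by (simp add: algebra_simps)
  moreover have "((\<lambda>t. e (c * Re \<tau> + c * t) * of_real (g (Im \<tau>))) has_vector_derivative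
      2 * pi * \<i> * of_real c * e (c * Re \<tau> + c * 0) * of_real (g (Im \<tau>))) (at 0)"
    by (intro has_vector_derivative_mult_left e_linear_has_vector_derivative)
  ultimately have dx: "dx F \<tau> = 2 * pi * \<i> * of_real c * e (c * Re \<tau>) * of_real (g (Im \<tau>))"
    unfolding dx_def by (simp add: vector_derivative_at)
  have "((\<lambda>t. g (Im \<tau> + t)) has_real_derivative g') (at 0)"
    using DERIV_shift[of g g' 0 "Im \<tau>"] g by (simp add: add.commute)
  then have "((\<lambda>t. e (c * Re \<tau>) * of_real (g (Im \<tau> + t))) has_vector_derivative
      e (c * Re \<tau>) * of_real g') (at 0)"
    by (intro has_vector_derivative_mult_right has_vector_derivative_of_real)
  then have "((\<lambda>t. F (\<tau> + \<i> * of_real t)) has_vector_derivative e (c * Re \<tau>) * of_real g') (at 0)"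
  proof (rule has_vector_derivative_transform_within_open[where S = "{- Im \<tau><..}"])
    fix t :: real assume "t \<in> {- Im \<tau><..}"
    then show "e (c * Re \<tau>) * of_real (g (Im \<tau> + t)) = F (\<tau> + \<i> * of_real t)"
      using F[of "\<tau> + \<i> * of_real t"] by simp
  qed (use y in auto)
  then have dy: "dy F \<tau> = e (c * Re \<tau>) * of_real g'"
    unfolding dy_def by (simp add: vector_derivative_at)
  show ?thesis
    unfolding Dop_def dx dy by (simp add: field_simps)
qed

lemma three_halves_minus_nat_notin_nonpos_Ints: "3/2 - real r \<notin> \<int>\<^sub>\<le>\<^sub>0"
proof
  assume "3/2 - real r \<in> \<int>\<^sub>\<le>\<^sub>0"
  then obtain n where "3/2 - real r = - real n"
    by (elim nonpos_Ints_cases')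
  then have "3 + 2 * n = 2 * r"
    by linarith
  then show False
    by presburger
qed

lemma Dop_funpow_delta:
  assumes "Im \<tau> > 0"
  shows "(Dop ^^ r) delta \<tau> = e (- Re \<tau> / 24) *
    of_real (pochhammer (- 3/2) r / 24 ^ r * kummer_profile (3/2 - real r) (pi * Im \<tau> / 6))"
  using assms
proof (induction r arbitrary: \<tau>)
  case 0
  then have "pi * Im \<tau> / 6 > 0"
    by simp
  from powr_whittakerM_eq_kummer_profile[OF this, of "1/4"] show ?case
    by (simp add: delta_def del: of_real_mult)
next
  case (Suc r)
  define a where "a = 3/2 - real r"
  define C :: real where "C = pochhammer (- 3/2) r / 24 ^ r"
  define Y where "Y = pi * Im \<tau> / 6"
  have profile: "(kummer_profile a has_real_derivative a * kummer_profile (a - 1) Y - kummer_profile a Y / 2) (at Y)"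
    unfolding a_def Y_def using Suc.prems three_halves_minus_nat_notin_nonpos_Ints
    by (intro has_real_derivative_kummer_profile) auto
  have deriv: "((\<lambda>y. C * kummer_profile a (pi * y / 6)) has_real_derivative
      C * ((a * kummer_profile (a - 1) Y - kummer_profile a Y / 2) * (pi / 6))) (at (Im \<tau>))"
    using profile unfolding Y_def
    by (intro DERIV_cmult DERIV_chain2[where g = "\<lambda>y. pi * y / 6"]) (auto intro!: derivative_eq_intros)
  have IH: "\<And>w. Im w > 0 \<Longrightarrow> (Dop ^^ r) delta w =
      e (- 1 / 24 * Re w) * of_real (C * kummer_profile a (pi * Im w / 6))"
    using Suc.IH unfolding a_def C_def by simp
  have "(Dop ^^ Suc r) delta \<tau> = e (- 1 / 24 * Re \<tau>) * of_real
      (- 1 / 24 * (C * kummer_profile a (pi * Im \<tau> / 6)) / 2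
       - C * ((a * kummer_profile (a - 1) Y - kummer_profile a Y / 2) * (pi / 6)) / (4 * pi))"
    unfolding funpow.simps o_apply by (rule Dop_e_times_of_Im[OF Suc.prems deriv IH])
  also have "\<dots> = e (- Re \<tau> / 24) * of_real (C * (- a / 24) * kummer_profile (a - 1) Y)"
    unfolding Y_def[symmetric] by (simp add: field_simps)
  also have "C * (- a / 24) = pochhammer (- 3/2) (Suc r) / 24 ^ Suc r"
    unfolding C_def a_def by (simp add: pochhammer_rec' field_simps)
  also have "a - 1 = 3/2 - real (Suc r)"
    unfolding a_def by simp
  finally show ?case
    unfolding Y_def .
qed

theorem mainTheorem9:
  fixes r :: nat and \<tau> :: complex
  assumes "Im \<tau> > 0"
  shows "(Dop ^^ r) delta \<tau> =
    of_real (1 / 24 ^ r * pochhammer (- 3/2) r) * e (- Re \<tau> / 24) *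
    of_real ((pi * Im \<tau> / 6) powr (1/4 - real r / 2) *
             whittakerM (1/4 - real r / 2) (3/4 - real r / 2) (pi * Im \<tau> / 6))"
proof -
  have "pi * Im \<tau> / 6 > 0"
    using assms by simp
  from powr_whittakerM_eq_kummer_profile[OF this, of "1/4 - real r / 2"]
  have "(pi * Im \<tau> / 6) powr (1/4 - real r / 2) *
      whittakerM (1/4 - real r / 2) (3/4 - real r / 2) (pi * Im \<tau> / 6)
      = kummer_profile (3/2 - real r) (pi * Im \<tau> / 6)"
    by (simp add: algebra_simps)
  then show ?thesis
    unfolding Dop_funpow_delta[OF assms] by (simp add: algebra_simps)
qed

end
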